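(* Suppose Assumption 1, Assumption 5 and Assumption 6 (below) hold. Then $\sqrt n(\widehat x_1^*-x_1^* )=O_p(1)$. Assumption 1: for $t\in\{1,2\}$, $Y_t(x)=g_t(U_t(x))$ where for all $(x,v)\in\mathcal X\times[0,1]$ the conditional law of $U_t(x)$ given $V_t=v$ does not depend on $t$. Assumption 5: one observes two independent samples $(Y_{i1},X_{i1})_{i=1}^n$ and $(Y_{i2},X_{i2})_{i=1}^n$, i.i.d. from the distributions of $(Y_1,X_1)$ and $(Y_2,X_2)$. Assumption 6: (i) there is a unique $x_1^*$ with $F_{X_1}(x_1^* )=F_{X_2}(x_1^* )\in(0,1)$, and $F_{X_1}(x_1^* )\in(\underline p,\overline p)$; (ii) for $t\in\{1,2\}$, $X_t$ has a continuous density $f_{X_t}$ with $f_{X_t}(x)>0$ for all $x$ in the interior of $\mathcal X$, and $f_{X_1}(x_1^* )\ne f_{X_2}(x_1^* )$.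
   Context: Two periods $t\in\{1,2\}$; potential outcomes $Y_t(x)$, $x\in\mathcal X\subset\mathbb R$; observed real treatment $X_t$ and outcome $Y_t=Y_t(X_t)$; $V_t=F_{X_t}(X_t)$. Fixed constants $0<\underline p<\overline p<1$. $\widehat F_{X_t}$ is the empirical cdf of $(X_{it})_i$ and $\widehat F^{-1}_{X_t}$ the empirical quantile function; $\Psi_n(x)=\widehat F_{X_2}(x)-\widehat F_{X_1}(x)$; $\widehat x_1^*$ is the smallest $x\in I_n=[\widehat F^{-1}_{X_1}(\underline p),\widehat F^{-1}_{X_1}(\overline p)]$ such that $|\Psi_n(x)|\le|\Psi_n(x')|$ for all $x'\in I_n$. *)

theory Defs
  imports "HOL-Probability.Probability"
begin

definition pop_cdf :: "'a measure \<Rightarrow> ('a \<Rightarrow> real) \<Rightarrow> real \<Rightarrow> real" where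
  "pop_cdf M X x = measure M {\<omega> \<in> space M. X \<omega> \<le> x}"

definition emp_cdf :: "(nat \<Rightarrow> 'a \<Rightarrow> real) \<Rightarrow> nat \<Rightarrow> 'a \<Rightarrow> real \<Rightarrow> real" where
  "emp_cdf Z n \<omega> x = real (card {i. i < n \<and> Z i \<omega> \<le> x}) / real n"

definition emp_quantile :: "(nat \<Rightarrow> 'a \<Rightarrow> real) \<Rightarrow> nat \<Rightarrow> 'a \<Rightarrow> real \<Rightarrow> real" where
  "emp_quantile Z n \<omega> p = Inf {x. emp_cdf Z n \<omega> x \<ge> p}"

definition xhat_star ::
  "(nat \<Rightarrow> 'a \<Rightarrow> real) \<Rightarrow> (nat \<Rightarrow> 'a \<Rightarrow> real) \<Rightarrow> real \<Rightarrow> real \<Rightarrow> nat \<Rightarrow> 'a \<Rightarrow> real" where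
  "xhat_star Z1 Z2 pl ph n \<omega> =
     (let I = {emp_quantile Z1 n \<omega> pl .. emp_quantile Z1 n \<omega> ph};
          Psi = (\<lambda>x. emp_cdf Z2 n \<omega> x - emp_cdf Z1 n \<omega> x)
      in LEAST x. x \<in> I \<and> (\<forall>x'\<in>I. \<bar>Psi x\<bar> \<le> \<bar>Psi x'\<bar>))"

text \<open>Stochastic boundedness O_p(1), phrased with outer probability
  (so that no measurability of Z n needs to be presupposed):
  for every eps > 0 there are K and N such that for n >= N the event |Z n| > K
  is contained in a measurable set of probability < eps.\<close>
definition bounded_in_prob :: "'a measure \<Rightarrow> (nat \<Rightarrow> 'a \<Rightarrow> real) \<Rightarrow> bool" where
  "bounded_in_prob M Z \<longleftrightarrow>
     (\<forall>\<epsilon>>0. \<exists>K N. \<forall>n\<ge>N. \<exists>A\<in>sets M.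
        {\<omega> \<in> space M. \<bar>Z n \<omega>\<bar> > K} \<subseteq> A \<and> measure M A < \<epsilon>)"

end

theory Submission
  imports Defs "HOL-Real_Asymp.Real_Asymp"
begin

text \<open>
  The population difference \<open>\<Psi> = F\<^sub>2 - F\<^sub>1\<close> vanishes only at \<open>x\<^sub>1\<^sup>*\<close>, where its slope
  \<open>f\<^sub>2(x\<^sub>1\<^sup>*) - f\<^sub>1(x\<^sub>1\<^sup>*)\<close> is non-zero, so on a compact bracket around \<open>x\<^sub>1\<^sup>*\<close> it grows at least
  like \<open>c \<bar>x - x\<^sub>1\<^sup>*\<bar>\<close>. Compare the empirical cdfs with the population cdfs on the grid
  \<open>x\<^sub>1\<^sup>* + k h\<close> with tolerance \<open>c/8 \<cdot> max (\<bar>k\<bar> h) r\<close>. The tolerance grows linearly in \<open>\<bar>k\<bar>\<close>, so the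
  Hoeffding bounds decay geometrically in \<open>\<bar>k\<bar>\<close> and some grid comparison fails with
  probability at most \<open>16 exp (-n (c r/8)\<^sup>2)\<close>. On the complementary event, monotonicity of
  the empirical cdfs interpolates between consecutive grid points, so every \<open>x\<close> with
  \<open>\<bar>x - x\<^sub>1\<^sup>*\<bar> > r\<close> has \<open>\<bar>\<Psi>\<^sub>n x\<bar> > \<bar>\<Psi>\<^sub>n x\<^sub>1\<^sup>*\<bar>\<close>; three more Hoeffding events keep the empirical
  quantile interval inside the bracket and around \<open>x\<^sub>1\<^sup>*\<close>. Taking \<open>r = K/\<surd>n\<close> gives the rate.
\<close>

section \<open>Empirical distribution functions and the estimator\<close>

lemma mono_emp_cdf: "mono (emp_cdf Z n \<omega>)"
proof (rule monoI)
  fix x y :: real assume "x \<le> y"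
  then have "card {i. i < n \<and> Z i \<omega> \<le> x} \<le> card {i. i < n \<and> Z i \<omega> \<le> y}"
    by (intro card_mono) auto
  then show "emp_cdf Z n \<omega> x \<le> emp_cdf Z n \<omega> y"
    unfolding emp_cdf_def by (simp add: divide_right_mono)
qed

lemma finite_range_emp_cdf: "finite (range (emp_cdf Z n \<omega>))"
proof (rule finite_subset)
  show "range (emp_cdf Z n \<omega>) \<subseteq> (\<lambda>j. real j / real n) ` {..n}"
  proof safe
    fix x
    have "card {i. i < n \<and> Z i \<omega> \<le> x} \<le> card {..<n}"
      by (intro card_mono) auto
    then show "emp_cdf Z n \<omega> x \<in> (\<lambda>j. real j / real n) ` {..n}"
      unfolding emp_cdf_def by auto
  qed
qed simp

lemma eventually_emp_cdf_at_right: "\<forall>\<^sub>F y in at_right s. emp_cdf Z n \<omega> y = emp_cdf Z n \<omega> s"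
proof -
  have "\<forall>\<^sub>F y in at_right s. s < y \<and> (\<forall>i\<in>{i. i < n \<and> s < Z i \<omega>}. y < Z i \<omega>)"
    by (intro eventually_conj eventually_at_right_less eventually_ball_finite ballI)
      (auto intro: eventually_at_right_field[THEN iffD2])
  then show ?thesis
  proof (rule eventually_mono)
    fix y assume "s < y \<and> (\<forall>i\<in>{i. i < n \<and> s < Z i \<omega>}. y < Z i \<omega>)"
    then have "{i. i < n \<and> Z i \<omega> \<le> y} = {i. i < n \<and> Z i \<omega> \<le> s}"
      by force
    then show "emp_cdf Z n \<omega> y = emp_cdf Z n \<omega> s"
      unfolding emp_cdf_def by simp
  qed
qed

lemma emp_cdf_eq_sum_indicator:
  "emp_cdf Z n \<omega> x = (\<Sum>i<n. indicator {..x} (Z i \<omega>)) / real n"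
  unfolding emp_cdf_def
  by (simp add: indicator_def sum.If_cases lessThan_def Collect_conj_eq Int_commute)

lemma borel_measurable_emp_cdf:
  assumes "\<And>i. i < n \<Longrightarrow> Z i \<in> borel_measurable M"
  shows "(\<lambda>\<omega>. emp_cdf Z n \<omega> x) \<in> borel_measurable M"
  unfolding emp_cdf_eq_sum_indicator using assms by measurable

lemma emp_quantile_le:
  assumes "0 < p" "p \<le> emp_cdf Z n \<omega> x"
  shows "emp_quantile Z n \<omega> p \<le> x"
proof -
  have "Min ((\<lambda>i. Z i \<omega>) ` {..<n}) \<le> y" if "p \<le> emp_cdf Z n \<omega> y" for y
  proof -
    have "card {i. i < n \<and> Z i \<omega> \<le> y} \<noteq> 0"
      using that \<open>0 < p\<close> unfolding emp_cdf_def by (intro notI) simp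
    then obtain i where "i < n" "Z i \<omega> \<le> y"
      by (metis (mono_tags, lifting) Collect_empty_eq card.empty)
    moreover have "Min ((\<lambda>i. Z i \<omega>) ` {..<n}) \<le> Z i \<omega>"
      using \<open>i < n\<close> by (intro Min_le) auto
    ultimately show ?thesis
      by linarith
  qed
  then show ?thesis
    unfolding emp_quantile_def using assms(2) by (intro cInf_lower bdd_belowI) auto
qed

lemma le_emp_quantile:
  assumes "emp_cdf Z n \<omega> x < p" "p \<le> emp_cdf Z n \<omega> y"
  shows "x \<le> emp_quantile Z n \<omega> p"
  unfolding emp_quantile_def
proof (rule cInf_greatest)
  show "{z. p \<le> emp_cdf Z n \<omega> z} \<noteq> {}"
    using assms(2) by blast
  show "x \<le> z" if "z \<in> {z. p \<le> emp_cdf Z n \<omega> z}" for z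
    using that assms(1) monoD[OF mono_emp_cdf[of Z n \<omega>], of z x] by (cases "x \<le> z") auto
qed

text \<open>Right-continuity makes the infimum of the minimisers a minimiser itself, so the
  \<open>LEAST\<close> in the definition of the estimator is not a junk value.\<close>

lemma Least_minimiser_Icc:
  fixes \<phi> :: "real \<Rightarrow> 'b::linorder"
  assumes fin: "finite (\<phi> ` {a..b})" and "a \<le> b"
    and const_right: "\<And>s. \<forall>\<^sub>F y in at_right s. \<phi> y = \<phi> s"
  defines "P \<equiv> \<lambda>x. x \<in> {a..b} \<and> (\<forall>y\<in>{a..b}. \<phi> x \<le> \<phi> y)"
  shows "P (Least P)"
proof -
  define m where "m = Min (\<phi> ` {a..b})"
  have m_le: "m \<le> \<phi> y" if "y \<in> {a..b}" for y
    using fin that unfolding m_def by auto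
  obtain x1 where x1: "x1 \<in> {a..b}" "\<phi> x1 = m"
    using Min_in[OF fin] \<open>a \<le> b\<close> unfolding m_def by fastforce
  define S where "S = {x \<in> {a..b}. \<phi> x = m}"
  have S: "x1 \<in> S" "bdd_below S"
    using x1 unfolding S_def by (auto intro: bdd_belowI[of _ a])
  define s where "s = Inf S"
  have "a \<le> s" "s \<le> b"
    using S x1 unfolding s_def S_def by (auto intro!: cInf_greatest cInf_lower2[of x1])
  have "\<phi> s = m"
  proof (rule ccontr)
    assume "\<phi> s \<noteq> m"
    obtain d where "s < d" and d: "\<And>y. s < y \<Longrightarrow> y < d \<Longrightarrow> \<phi> y = \<phi> s"
      using const_right[of s] unfolding eventually_at_right_field by blast
    then obtain y where "y \<in> S" "y < d"
      using cInf_less_iff[of S d] S unfolding s_def by blast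
    moreover have "s \<le> y"
      using \<open>y \<in> S\<close> S(2) unfolding s_def by (rule cInf_lower)
    ultimately show False
      using d[of y] \<open>\<phi> s \<noteq> m\<close> unfolding S_def by force
  qed
  then have "P s"
    using \<open>a \<le> s\<close> \<open>s \<le> b\<close> m_le unfolding P_def by auto
  moreover have "s \<le> y" if "P y" for y
  proof -
    have "y \<in> S"
      using that x1 m_le[of y] unfolding P_def S_def by force
    then show ?thesis
      using S(2) unfolding s_def by (rule cInf_lower)
  qed
  ultimately show ?thesis
    by (rule LeastI2_order)
qed

lemma xhat_star_minimises:
  fixes S T :: "nat \<Rightarrow> 'a \<Rightarrow> real"
  assumes "emp_quantile S n \<omega> pl \<le> emp_quantile S n \<omega> ph"
  defines "I \<equiv> {emp_quantile S n \<omega> pl..emp_quantile S n \<omega> ph}"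
    and "\<Psi> \<equiv> \<lambda>x. emp_cdf T n \<omega> x - emp_cdf S n \<omega> x"
  shows "xhat_star S T pl ph n \<omega> \<in> I"
    and "\<And>x. x \<in> I \<Longrightarrow> \<bar>\<Psi> (xhat_star S T pl ph n \<omega>)\<bar> \<le> \<bar>\<Psi> x\<bar>"
proof -
  let ?R = "(\<lambda>(u, v). \<bar>v - u\<bar>) ` (range (emp_cdf S n \<omega>) \<times> range (emp_cdf T n \<omega>))"
  have "(\<lambda>x. \<bar>\<Psi> x\<bar>) ` I \<subseteq> ?R"
  proof
    fix y assume "y \<in> (\<lambda>x. \<bar>\<Psi> x\<bar>) ` I"
    then obtain x where "y = \<bar>\<Psi> x\<bar>" by blast
    then show "y \<in> ?R"
      unfolding \<Psi>_def by (intro rev_image_eqI[of "(emp_cdf S n \<omega> x, emp_cdf T n \<omega> x)"]) auto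
  qed
  moreover have "finite ?R"
    by (intro finite_imageI finite_cartesian_product finite_range_emp_cdf)
  ultimately have "finite ((\<lambda>x. \<bar>\<Psi> x\<bar>) ` I)"
    by (rule finite_subset)
  moreover have "\<forall>\<^sub>F y in at_right s. \<bar>\<Psi> y\<bar> = \<bar>\<Psi> s\<bar>" for s
    using eventually_conj[OF eventually_emp_cdf_at_right[of S n \<omega> s] eventually_emp_cdf_at_right[of T n \<omega> s]]
    unfolding \<Psi>_def by (rule eventually_mono) simp
  ultimately have "(LEAST x. x \<in> I \<and> (\<forall>y\<in>I. \<bar>\<Psi> x\<bar> \<le> \<bar>\<Psi> y\<bar>)) \<in> I \<and>
      (\<forall>y\<in>I. \<bar>\<Psi> (LEAST x. x \<in> I \<and> (\<forall>y\<in>I. \<bar>\<Psi> x\<bar> \<le> \<bar>\<Psi> y\<bar>))\<bar> \<le> \<bar>\<Psi> y\<bar>)"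
    unfolding I_def by (rule Least_minimiser_Icc[OF _ assms(1)])
  moreover have "xhat_star S T pl ph n \<omega> = (LEAST x. x \<in> I \<and> (\<forall>y\<in>I. \<bar>\<Psi> x\<bar> \<le> \<bar>\<Psi> y\<bar>))"
    unfolding xhat_star_def Let_def I_def \<Psi>_def ..
  ultimately show "xhat_star S T pl ph n \<omega> \<in> I"
    and "\<And>x. x \<in> I \<Longrightarrow> \<bar>\<Psi> (xhat_star S T pl ph n \<omega>)\<bar> \<le> \<bar>\<Psi> x\<bar>"
    by auto
qed

section \<open>Distribution functions with a continuous density\<close>

lemma pop_cdf_eq_cdf:
  assumes "X \<in> borel_measurable M"
  shows "pop_cdf M X = cdf (distr M borel X)"
proof
  fix x
  have "{\<omega> \<in> space M. X \<omega> \<le> x} = X -` {..x} \<inter> space M"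
    by auto
  then show "pop_cdf M X x = cdf (distr M borel X) x"
    using assms unfolding pop_cdf_def cdf_def by (simp add: measure_distr)
qed

lemma mono_pop_cdf:
  assumes "prob_space M" "X \<in> borel_measurable M"
  shows "mono (pop_cdf M X)"
proof -
  interpret real_distribution "distr M borel X"
    using assms by (simp add: prob_space.real_distribution_distr)
  show ?thesis
    unfolding pop_cdf_eq_cdf[OF assms(2)] by (rule monoI) (rule cdf_nondecreasing)
qed

lemma
  assumes "prob_space M" "X \<in> borel_measurable M"
  shows tendsto_pop_cdf_at_bot: "(pop_cdf M X \<longlongrightarrow> 0) at_bot"
    and tendsto_pop_cdf_at_top: "(pop_cdf M X \<longlongrightarrow> 1) at_top"
proof -
  interpret real_distribution "distr M borel X"
    using assms by (simp add: prob_space.real_distribution_distr)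
  show "(pop_cdf M X \<longlongrightarrow> 0) at_bot" "(pop_cdf M X \<longlongrightarrow> 1) at_top"
    unfolding pop_cdf_eq_cdf[OF assms(2)] by (rule cdf_lim_at_bot, rule cdf_lim_at_top_prob)
qed

lemma pop_cdf_diff_bounds:
  assumes M: "prob_space M" and D: "distributed M lborel X (\<lambda>x. ennreal (f x))"
    and "u \<le> v" "0 \<le> lo" and f_bounds: "\<And>x. x \<in> {u..v} \<Longrightarrow> lo \<le> f x \<and> f x \<le> hi"
  shows "lo * (v - u) \<le> pop_cdf M X v - pop_cdf M X u"
    and "pop_cdf M X v - pop_cdf M X u \<le> hi * (v - u)"
proof -
  interpret prob_space M by (rule M)
  have X: "X \<in> borel_measurable M"
    using distributed_measurable[OF D] by simp
  have "pop_cdf M X v - pop_cdf M X u = measure M (X -` {u<..v} \<inter> space M)"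
  proof -
    have "X -` {u<..v} \<inter> space M = {\<omega> \<in> space M. X \<omega> \<le> v} - {\<omega> \<in> space M. X \<omega> \<le> u}"
      by auto
    then show ?thesis
      unfolding pop_cdf_def using X \<open>u \<le> v\<close> by (subst finite_measure_Diff[symmetric]) auto
  qed
  then have diff: "ennreal (pop_cdf M X v - pop_cdf M X u) = (\<integral>\<^sup>+x. ennreal (f x) * indicator {u<..v} x \<partial>lborel)"
    by (simp add: emeasure_eq_measure[symmetric] distributed_emeasure[OF D])
  have "ennreal (lo * (v - u)) = (\<integral>\<^sup>+x. ennreal lo * indicator {u<..v} x \<partial>lborel)"
    using \<open>u \<le> v\<close> \<open>0 \<le> lo\<close> by (subst nn_integral_cmult_indicator) (auto simp: ennreal_mult)
  also have "\<dots> \<le> ennreal (pop_cdf M X v - pop_cdf M X u)"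
    unfolding diff
    by (intro nn_integral_mono) (use f_bounds in \<open>fastforce simp: indicator_def intro!: ennreal_leI\<close>)
  finally show "lo * (v - u) \<le> pop_cdf M X v - pop_cdf M X u"
    using monoD[OF mono_pop_cdf[OF M X] \<open>u \<le> v\<close>] by simp
  have "0 \<le> hi"
    using f_bounds[of u] \<open>u \<le> v\<close> \<open>0 \<le> lo\<close> by auto
  have "ennreal (pop_cdf M X v - pop_cdf M X u) \<le> (\<integral>\<^sup>+x. ennreal hi * indicator {u<..v} x \<partial>lborel)"
    unfolding diff
    by (intro nn_integral_mono) (use f_bounds in \<open>fastforce simp: indicator_def intro!: ennreal_leI\<close>)
  also have "\<dots> = ennreal (hi * (v - u))"
    using \<open>u \<le> v\<close> \<open>0 \<le> hi\<close> by (subst nn_integral_cmult_indicator) (auto simp: ennreal_mult)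
  finally show "pop_cdf M X v - pop_cdf M X u \<le> hi * (v - u)"
    using \<open>u \<le> v\<close> \<open>0 \<le> hi\<close> by simp
qed

lemma pop_cdf_difference_quotient:
  assumes M: "prob_space M" and D: "distributed M lborel X (\<lambda>x. ennreal (f x))"
    and nonneg: "\<And>x. 0 \<le> f x" and "a < b" and near: "\<And>z. z \<in> {a..b} \<Longrightarrow> \<bar>f z - y\<bar> \<le> e"
  shows "\<bar>(pop_cdf M X b - pop_cdf M X a) / (b - a) - y\<bar> \<le> e"
proof -
  let ?F = "pop_cdf M X"
  have f_bounds: "max 0 (y - e) \<le> f z \<and> f z \<le> y + e" if "z \<in> {a..b}" for z
    using near[OF that] nonneg[of z] unfolding abs_le_iff by linarith
  have "(y - e) * (b - a) \<le> max 0 (y - e) * (b - a)"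
    using \<open>a < b\<close> by (intro mult_right_mono) auto
  also have "\<dots> \<le> ?F b - ?F a"
    using pop_cdf_diff_bounds(1)[OF M D _ _ f_bounds] \<open>a < b\<close> by auto
  finally have "(y - e) * (b - a) \<le> ?F b - ?F a" .
  moreover have "?F b - ?F a \<le> (y + e) * (b - a)"
    using pop_cdf_diff_bounds(2)[OF M D _ _ f_bounds] \<open>a < b\<close> by auto
  ultimately have "y - e \<le> (?F b - ?F a) / (b - a)" "(?F b - ?F a) / (b - a) \<le> y + e"
    using \<open>a < b\<close> by (simp_all add: pos_le_divide_eq pos_divide_le_eq)
  then show ?thesis
    unfolding abs_le_iff by linarith
qed

lemma pop_cdf_has_real_derivative:
  assumes M: "prob_space M" and D: "distributed M lborel X (\<lambda>x. ennreal (f x))"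
    and nonneg: "\<And>x. 0 \<le> f x" and "isCont f x"
  shows "(pop_cdf M X has_real_derivative f x) (at x)"
  unfolding has_field_derivative_iff tendsto_iff eventually_at
proof (intro allI impI)
  let ?F = "pop_cdf M X"
  fix e :: real assume "0 < e"
  then obtain d where "0 < d" and d: "\<And>y. dist y x < d \<Longrightarrow> \<bar>f y - f x\<bar> < e / 2"
    using \<open>isCont f x\<close> unfolding continuous_at_eps_delta by (metis dist_real_def half_gt_zero)
  have quotient: "\<bar>(?F b - ?F a) / (b - a) - f x\<bar> \<le> e / 2" if "a < b" "{a..b} \<subseteq> ball x d" for a b
    using that d by (intro pop_cdf_difference_quotient[OF M D nonneg]) (force simp: dist_commute)+
  have "dist ((?F y - ?F x) / (y - x)) (f x) < e" if "y \<noteq> x" "dist y x < d" for y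
  proof (cases "x < y")
    case True
    then have "{x..y} \<subseteq> ball x d"
      using that by (auto simp: dist_real_def)
    then show ?thesis
      using quotient[of x y] True \<open>0 < e\<close> by (simp add: dist_real_def)
  next
    case False
    then have "y < x" "{y..x} \<subseteq> ball x d"
      using that by (auto simp: dist_real_def)
    moreover have "(?F y - ?F x) / (y - x) = (?F x - ?F y) / (x - y)"
      by (metis minus_diff_eq minus_divide_divide)
    ultimately show ?thesis
      using quotient[of y x] \<open>0 < e\<close> by (simp add: dist_real_def)
  qed
  then show "\<exists>d>0. \<forall>y\<in>UNIV. y \<noteq> x \<and> dist y x < d \<longrightarrow> dist ((?F y - ?F x) / (y - x)) (f x) < e"
    using \<open>0 < d\<close> by blast
qed

lemma continuous_on_pop_cdf:
  assumes M: "prob_space M" and D: "distributed M lborel X (\<lambda>x. ennreal (f x))"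
    and nonneg: "\<And>x. 0 \<le> f x" and cont: "continuous_on UNIV f"
  shows "continuous_on UNIV (pop_cdf M X)"
proof (rule continuous_at_imp_continuous_on, rule ballI)
  fix x :: real
  have "isCont f x"
    using cont by (simp add: continuous_on_eq_continuous_at)
  then show "isCont (pop_cdf M X) x"
    by (rule DERIV_isCont[OF pop_cdf_has_real_derivative[OF M D nonneg]])
qed

lemma lipschitz_on_pop_cdf:
  assumes M: "prob_space M" and D: "distributed M lborel X (\<lambda>x. ennreal (f x))"
    and nonneg: "\<And>x. 0 \<le> f x" and cont: "continuous_on {a..b} f"
  obtains B where "B-lipschitz_on {a..b} (pop_cdf M X)"
proof -
  obtain B where B: "\<And>x. x \<in> {a..b} \<Longrightarrow> f x \<le> B"
    using compact_imp_bounded[OF compact_continuous_image[OF cont compact_Icc]]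
    unfolding bounded_real by (meson abs_le_D1 image_eqI)
  have "(max B 0)-lipschitz_on {a..b} (pop_cdf M X)"
  proof (rule lipschitz_on_leI)
    fix u v assume uv: "u \<in> {a..b}" "v \<in> {a..b}" "u \<le> v"
    have f_bounds: "0 \<le> f x \<and> f x \<le> max B 0" if "x \<in> {u..v}" for x
      using that uv B[of x] nonneg[of x] by auto
    have "0 * (v - u) \<le> pop_cdf M X v - pop_cdf M X u"
      by (rule pop_cdf_diff_bounds(1)[OF M D \<open>u \<le> v\<close> order_refl f_bounds])
    moreover have "pop_cdf M X v - pop_cdf M X u \<le> max B 0 * (v - u)"
      by (rule pop_cdf_diff_bounds(2)[OF M D \<open>u \<le> v\<close> order_refl f_bounds])
    ultimately show "dist (pop_cdf M X u) (pop_cdf M X v) \<le> max B 0 * dist u v"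
      using uv by (simp add: dist_real_def)
  qed simp
  then show ?thesis
    by (rule that)
qed

lemma continuous_attains_value_left:
  fixes F :: "real \<Rightarrow> real"
  assumes "continuous_on UNIV F" "(F \<longlongrightarrow> 0) at_bot" "0 < p" "p < F x"
  obtains y where "y < x" "F y = p"
proof -
  obtain N where N: "\<And>y. y \<le> N \<Longrightarrow> F y < p"
    using order_tendstoD(2)[OF assms(2) \<open>0 < p\<close>] unfolding eventually_at_bot_linorder by blast
  have "\<exists>y\<ge>min N x. y \<le> x \<and> F y = p"
    using N[of "min N x"] assms(1,4) by (intro IVT') (auto intro: continuous_on_subset)
  then obtain y where "y \<le> x" "F y = p"
    by blast
  moreover have "y \<noteq> x"
    using \<open>F y = p\<close> \<open>p < F x\<close> by auto
  ultimately show ?thesis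
    using that by force
qed

lemma continuous_attains_value_right:
  fixes F :: "real \<Rightarrow> real"
  assumes "continuous_on UNIV F" "(F \<longlongrightarrow> 1) at_top" "F x < p" "p < 1"
  obtains y where "x < y" "F y = p"
proof -
  obtain N where N: "\<And>y. N \<le> y \<Longrightarrow> p < F y"
    using order_tendstoD(1)[OF assms(2) \<open>p < 1\<close>] unfolding eventually_at_top_linorder by blast
  have "\<exists>y\<ge>x. y \<le> max N x \<and> F y = p"
    using N[of "max N x"] assms(1,3) by (intro IVT') (auto intro: continuous_on_subset)
  then obtain y where "x \<le> y" "F y = p"
    by blast
  moreover have "y \<noteq> x"
    using \<open>F y = p\<close> \<open>F x < p\<close> by auto
  ultimately show ?thesis
    using that by force
qed

lemma cdf_bracket:
  fixes F :: "real \<Rightarrow> real"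
  assumes cont: "continuous_on UNIV F" and "mono F"
    and lim: "(F \<longlongrightarrow> 0) at_bot" "(F \<longlongrightarrow> 1) at_top"
    and "0 < pl" "pl < F x0" "F x0 < ph" "ph < 1"
  obtains a L R b where "a < L" "L < x0" "x0 < R" "R < b" "F L < pl" "ph < F R"
    "\<And>x. x \<in> {a..b} \<Longrightarrow> 0 < F x \<and> F x < 1"
proof -
  obtain L where "L < x0" "F L = pl / 2"
    using continuous_attains_value_left[OF cont lim(1), of "pl / 2" x0] assms(5,6) by auto
  moreover obtain a where "a < L" "F a = pl / 4"
    using continuous_attains_value_left[OF cont lim(1), of "pl / 4" L] \<open>F L = pl / 2\<close> assms(5) by auto
  moreover obtain R where "x0 < R" "F R = (1 + ph) / 2"
    using continuous_attains_value_right[OF cont lim(2), of x0 "(1 + ph) / 2"] assms(7,8) by auto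
  moreover obtain b where "R < b" "F b = (3 + ph) / 4"
    using continuous_attains_value_right[OF cont lim(2), of R "(3 + ph) / 4"] \<open>F R = (1 + ph) / 2\<close> assms(8)
    by auto
  moreover have "0 < F x \<and> F x < 1" if "x \<in> {a..b}" for x
    using monoD[OF \<open>mono F\<close>, of a x] monoD[OF \<open>mono F\<close>, of x b] that \<open>F a = pl / 4\<close> \<open>F b = (3 + ph) / 4\<close>
      assms(5,8) by auto
  ultimately show ?thesis
    using assms(5,8) that by auto
qed

section \<open>Linear growth at a transversal crossing\<close>

lemma eventually_linear_growth:
  fixes P :: "real \<Rightarrow> real"
  assumes "(P has_real_derivative D) (at x0)" "D \<noteq> 0"
  shows "\<forall>\<^sub>F x in at x0. \<bar>D\<bar> / 2 * \<bar>x - x0\<bar> \<le> \<bar>P x - P x0\<bar>"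
proof -
  have "\<forall>\<^sub>F x in at x0. dist ((P x - P x0) / (x - x0)) D < \<bar>D\<bar> / 2"
    using assms(1) \<open>D \<noteq> 0\<close> unfolding has_field_derivative_iff tendsto_iff
    by (meson half_gt_zero zero_less_abs_iff)
  moreover have "\<forall>\<^sub>F x in at x0. x \<noteq> x0"
    by (rule eventually_at_filter[THEN iffD2]) simp
  ultimately show ?thesis
  proof eventually_elim
    case (elim x)
    define q where "q = (P x - P x0) / (x - x0)"
    have "\<bar>D\<bar> \<le> \<bar>q\<bar> + \<bar>D - q\<bar>"
      using abs_triangle_ineq[of q "D - q"] by simp
    moreover have "\<bar>D - q\<bar> < \<bar>D\<bar> / 2"
      using elim(1) unfolding q_def dist_real_def by (simp add: abs_minus_commute)
    ultimately have "\<bar>D\<bar> / 2 * \<bar>x - x0\<bar> \<le> \<bar>q\<bar> * \<bar>x - x0\<bar>"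
      by (intro mult_right_mono) auto
    with elim(2) show ?case
      by (simp add: q_def)
  qed
qed

lemma linear_growth_on_Icc:
  fixes P :: "real \<Rightarrow> real"
  assumes cont: "continuous_on {a..b} P" and "a < x0" "x0 < b"
    and unique: "\<And>x. x \<in> {a..b} \<Longrightarrow> P x = P x0 \<Longrightarrow> x = x0"
    and local: "\<forall>\<^sub>F x in at x0. c0 * \<bar>x - x0\<bar> \<le> \<bar>P x - P x0\<bar>" "0 < c0"
  obtains c where "0 < c" "\<And>x. x \<in> {a..b} \<Longrightarrow> c * \<bar>x - x0\<bar> \<le> \<bar>P x - P x0\<bar>"
proof -
  obtain \<delta> where "0 < \<delta>"
    and near0: "\<And>x. x \<noteq> x0 \<Longrightarrow> \<bar>x - x0\<bar> < \<delta> \<Longrightarrow> c0 * \<bar>x - x0\<bar> \<le> \<bar>P x - P x0\<bar>"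
    using local(1) unfolding eventually_at dist_real_def by blast
  have near: "c0 * \<bar>x - x0\<bar> \<le> \<bar>P x - P x0\<bar>" if "\<bar>x - x0\<bar> < \<delta>" for x
    using near0[of x] that by (cases "x = x0") auto
  define d where "d = min (\<delta> / 2) (min (x0 - a) (b - x0))"
  have d: "0 < d" "d < \<delta>" "a \<le> x0 - d" "x0 + d \<le> b"
    using \<open>0 < \<delta>\<close> \<open>a < x0\<close> \<open>x0 < b\<close> unfolding d_def by auto
  define S where "S = {a..x0 - d} \<union> {x0 + d..b}"
  have "S \<subseteq> {a..b}"
    using d(1,3,4) unfolding S_def by (intro Un_least) auto
  have "compact S" "S \<noteq> {}"
    using d unfolding S_def by auto
  moreover have "continuous_on S (\<lambda>x. \<bar>P x - P x0\<bar>)"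
    using \<open>S \<subseteq> {a..b}\<close> by (intro continuous_intros continuous_on_subset[OF cont])
  ultimately obtain z where "z \<in> S" and z_min: "\<And>x. x \<in> S \<Longrightarrow> \<bar>P z - P x0\<bar> \<le> \<bar>P x - P x0\<bar>"
    by (metis continuous_attains_inf)
  then have "z \<in> {a..b}" "z \<noteq> x0"
    using \<open>S \<subseteq> {a..b}\<close> d(1) unfolding S_def by auto
  then have m: "0 < \<bar>P z - P x0\<bar>"
    using unique by fastforce
  define c where "c = min c0 (\<bar>P z - P x0\<bar> / (b - a))"
  have "0 < c"
    using \<open>0 < c0\<close> m \<open>a < x0\<close> \<open>x0 < b\<close> unfolding c_def by auto
  moreover have "c * \<bar>x - x0\<bar> \<le> \<bar>P x - P x0\<bar>" if x: "x \<in> {a..b}" for x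
  proof (cases "\<bar>x - x0\<bar> < d")
    case True
    have "c * \<bar>x - x0\<bar> \<le> c0 * \<bar>x - x0\<bar>"
      unfolding c_def by (intro mult_right_mono) auto
    also have "\<dots> \<le> \<bar>P x - P x0\<bar>"
      using near True d by auto
    finally show ?thesis .
  next
    case False
    then have "x \<in> S"
      using x unfolding S_def by auto
    have "c * \<bar>x - x0\<bar> \<le> \<bar>P z - P x0\<bar> / (b - a) * (b - a)"
      using x \<open>0 < c\<close> \<open>a < x0\<close> \<open>x0 < b\<close> unfolding c_def by (intro mult_mono) auto
    also have "\<dots> \<le> \<bar>P x - P x0\<bar>"
      using z_min[OF \<open>x \<in> S\<close>] \<open>a < x0\<close> \<open>x0 < b\<close> by simp
    finally show ?thesis .
  qed
  ultimately show ?thesis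
    by (rule that)
qed

lemma transversal_crossing_linear_separation:
  fixes F1 F2 :: "real \<Rightarrow> real"
  assumes "continuous_on {a..b} F1" "continuous_on {a..b} F2" "a < x0" "x0 < b"
    and "(F1 has_real_derivative d1) (at x0)" "(F2 has_real_derivative d2) (at x0)" "d1 \<noteq> d2"
    and "F1 x0 = F2 x0" and unique: "\<And>x. x \<in> {a..b} \<Longrightarrow> F1 x = F2 x \<Longrightarrow> x = x0"
  obtains c where "0 < c" "\<And>x. x \<in> {a..b} \<Longrightarrow> c * \<bar>x - x0\<bar> \<le> \<bar>F2 x - F1 x\<bar>"
proof -
  let ?P = "\<lambda>x. F2 x - F1 x"
  have "continuous_on {a..b} ?P"
    using assms(1,2) by (rule continuous_on_diff[rotated])
  moreover have "x = x0" if "x \<in> {a..b}" "?P x = ?P x0" for x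
    using unique[OF that(1)] that(2) \<open>F1 x0 = F2 x0\<close> by simp
  moreover have "(?P has_real_derivative d2 - d1) (at x0)"
    using assms(5,6) by (rule DERIV_diff[rotated])
  then have "\<forall>\<^sub>F x in at x0. \<bar>d2 - d1\<bar> / 2 * \<bar>x - x0\<bar> \<le> \<bar>?P x - ?P x0\<bar>"
    using \<open>d1 \<noteq> d2\<close> by (intro eventually_linear_growth) auto
  moreover have "0 < \<bar>d2 - d1\<bar> / 2"
    using \<open>d1 \<noteq> d2\<close> by simp
  ultimately obtain c where "0 < c" "\<And>x. x \<in> {a..b} \<Longrightarrow> c * \<bar>x - x0\<bar> \<le> \<bar>?P x - ?P x0\<bar>"
    using linear_growth_on_Icc \<open>a < x0\<close> \<open>x0 < b\<close> by blast
  then show ?thesis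
    using that \<open>F1 x0 = F2 x0\<close> by simp
qed

section \<open>Concentration of the empirical distribution function\<close>

lemma (in prob_space) pop_cdf_eq_expectation:
  assumes "random_variable borel X"
  shows "pop_cdf M X x = expectation (\<lambda>\<omega>. indicator {..x} (X \<omega>))"
proof -
  have "expectation (\<lambda>\<omega>. indicator {..x} (X \<omega>)) = expectation (indicator {\<omega> \<in> space M. X \<omega> \<le> x})"
    by (intro Bochner_Integration.integral_cong) (auto simp: indicator_def)
  also have "\<dots> = pop_cdf M X x"
    using assms unfolding pop_cdf_def by simp
  finally show ?thesis
    by simp
qed

lemma (in prob_space) emp_cdf_concentration:
  fixes W :: "'i \<Rightarrow> 'a \<Rightarrow> real" and s :: "nat \<Rightarrow> 'i"
  assumes indep: "indep_vars (\<lambda>_. borel) W J" and "inj_on s {..<n}" "s ` {..<n} \<subseteq> J"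
    and ident: "\<And>j. j \<in> J \<Longrightarrow> distr M borel (W j) = distr M borel X"
    and X: "random_variable borel X" and "0 < n" "0 \<le> e"
  shows "prob {\<omega> \<in> space M. e \<le> \<bar>emp_cdf (\<lambda>i. W (s i)) n \<omega> u - pop_cdf M X u\<bar>}
    \<le> 2 * exp (- 2 * real n * e\<^sup>2)"
proof -
  define h :: "real \<Rightarrow> real" where "h = indicator {..u}"
  have h: "h \<in> borel_measurable borel"
    unfolding h_def by measurable
  define I where "I = s ` {..<n}"
  have W: "random_variable borel (W j)" if "j \<in> J" for j
    using indep that by (simp add: indep_vars_def)
  interpret Hoeffding_ineq_iid M I "\<lambda>i \<omega>. h (W i \<omega>)" "\<lambda>\<omega>. h (X \<omega>)" 0 1 "expectation (\<lambda>\<omega>. h (X \<omega>))"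
  proof unfold_locales
    show "finite I"
      unfolding I_def by simp
    show "indep_vars (\<lambda>_. borel) (\<lambda>i \<omega>. h (W i \<omega>)) I"
      using \<open>s ` {..<n} \<subseteq> J\<close> unfolding I_def
      by (intro indep_vars_compose2[OF indep_vars_subset[OF indep]] h)
    show "distr M borel (\<lambda>\<omega>. h (W i \<omega>)) = distr M borel (\<lambda>\<omega>. h (X \<omega>))" if "i \<in> I" for i
    proof -
      have "i \<in> J"
        using that \<open>s ` {..<n} \<subseteq> J\<close> unfolding I_def by blast
      then have "distr M borel (h \<circ> W i) = distr M borel (h \<circ> X)"
        using distr_distr[OF h W] distr_distr[OF h X] ident by metis
      then show ?thesis
        by (simp add: comp_def)
    qed
    show "random_variable borel (\<lambda>\<omega>. h (X \<omega>))"
      using h X by measurable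
    show "AE \<omega> in M. h (X \<omega>) \<in> {0..1}"
      unfolding h_def by (simp add: indicator_def)
  qed
  have mean: "expectation (\<lambda>\<omega>. h (X \<omega>)) = pop_cdf M X u"
    unfolding h_def by (rule pop_cdf_eq_expectation[OF X, symmetric])
  have card: "card I = n"
    unfolding I_def using \<open>inj_on s {..<n}\<close> by (simp add: card_image)
  have emp: "(\<Sum>i\<in>I. h (W i \<omega>)) / real n = emp_cdf (\<lambda>i. W (s i)) n \<omega> u" for \<omega>
    unfolding I_def h_def emp_cdf_eq_sum_indicator using \<open>inj_on s {..<n}\<close> by (simp add: sum.reindex)
  show ?thesis
    using Hoeffding_ineq_abs_ge'[OF \<open>0 \<le> e\<close>] \<open>0 < n\<close>
    unfolding card emp mean by (simp add: I_def lessThan_empty_iff)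
qed

lemma (in prob_space) sample_emp_cdf_concentration:
  fixes Xs Ys :: "'t \<Rightarrow> nat \<Rightarrow> 'a \<Rightarrow> real"
  assumes indep: "indep_vars (\<lambda>_. borel) (\<lambda>(t, i) \<omega>. (Ys t i \<omega>, Xs t i \<omega>)) (T \<times> UNIV)"
    and ident: "\<And>i. distr M borel (\<lambda>\<omega>. (Ys t i \<omega>, Xs t i \<omega>)) = distr M borel (\<lambda>\<omega>. (Y \<omega>, X \<omega>))"
    and X: "random_variable borel X" and Y: "random_variable borel Y"
    and "t \<in> T" "0 < n" "0 \<le> e"
  shows "prob {\<omega> \<in> space M. e \<le> \<bar>emp_cdf (Xs t) n \<omega> u - pop_cdf M X u\<bar>} \<le> 2 * exp (- 2 * real n * e\<^sup>2)"
proof -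
  let ?W = "\<lambda>(t, i) \<omega>. Xs t i \<omega>"
  have "indep_vars (\<lambda>_. borel) (\<lambda>p \<omega>. snd ((\<lambda>(t, i) \<omega>. (Ys t i \<omega>, Xs t i \<omega>)) p \<omega>)) (T \<times> UNIV)"
    by (rule indep_vars_compose2[OF indep]) (simp flip: borel_prod)
  moreover have "(\<lambda>p \<omega>. snd ((\<lambda>(t, i) \<omega>. (Ys t i \<omega>, Xs t i \<omega>)) p \<omega>)) = ?W"
    by (simp add: fun_eq_iff split: prod.split)
  ultimately have "indep_vars (\<lambda>_. borel) ?W (T \<times> UNIV)"
    by simp
  then have "indep_vars (\<lambda>_. borel) ?W ({t} \<times> UNIV)"
    by (rule indep_vars_subset) (use \<open>t \<in> T\<close> in blast)
  moreover have "distr M borel (?W j) = distr M borel X" if j: "j \<in> {t} \<times> UNIV" for j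
  proof -
    obtain i where j: "j = (t, i)"
      using j by blast
    have pair: "random_variable borel (\<lambda>\<omega>. (Ys t i \<omega>, Xs t i \<omega>))"
      using indep \<open>t \<in> T\<close> unfolding indep_vars_def by auto
    have "distr M borel (Xs t i) = distr (distr M borel (\<lambda>\<omega>. (Ys t i \<omega>, Xs t i \<omega>))) borel snd"
      using pair by (subst distr_distr) (auto simp: comp_def simp flip: borel_prod)
    also have "\<dots> = distr M borel X"
      unfolding ident using X Y by (subst distr_distr) (auto simp: comp_def simp flip: borel_prod)
    finally show ?thesis
      unfolding j by simp
  qed
  ultimately show ?thesis
    using emp_cdf_concentration[of ?W "{t} \<times> UNIV" "Pair t" n X e u] X assms(6,7)
    by (simp add: inj_on_def image_subset_iff)
qed

lemma sum_power_abs_int_le: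
  fixes q :: real
  assumes "finite S" "0 \<le> q" "q < 1"
  shows "(\<Sum>k\<in>S. q ^ nat \<bar>k\<bar>) \<le> 2 / (1 - q)"
proof -
  have geometric: "(\<Sum>j\<in>J. q ^ j) \<le> 1 / (1 - q)" if "finite J" for J :: "nat set"
    using sum_le_suminf[OF summable_geometric that, of q] assms by (simp add: suminf_geometric)
  have "(\<Sum>k\<in>S. q ^ nat \<bar>k\<bar>) = (\<Sum>k\<in>S \<inter> {0..}. q ^ nat \<bar>k\<bar>) + (\<Sum>k\<in>S \<inter> {..<0}. q ^ nat \<bar>k\<bar>)"
    using \<open>finite S\<close> by (subst sum.union_disjoint[symmetric]) (auto intro: sum.cong)
  also have "\<dots> = (\<Sum>j\<in>nat ` (S \<inter> {0..}). q ^ j) + (\<Sum>j\<in>(\<lambda>k. nat (- k)) ` (S \<inter> {..<0}). q ^ j)"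
    by (subst (1 2) sum.reindex) (auto simp: inj_on_def intro!: sum.cong)
  also have "\<dots> \<le> 1 / (1 - q) + 1 / (1 - q)"
    using \<open>finite S\<close> by (intro add_mono geometric) auto
  finally show ?thesis
    by simp
qed

lemma grid_tolerance_exponent:
  fixes \<kappa> h r n :: real and k :: int
  assumes "0 \<le> \<kappa>" "0 < h" "0 \<le> r" "1 \<le> n * (\<kappa> * h)\<^sup>2"
  shows "n * (\<kappa> * r)\<^sup>2 + \<bar>of_int k\<bar> \<le> 2 * n * (\<kappa> * max (\<bar>of_int k\<bar> * h) r)\<^sup>2"
proof -
  define e where "e = \<kappa> * max (\<bar>of_int k\<bar> * h) r"
  have "0 \<le> n"
  proof (rule ccontr)
    assume "\<not> 0 \<le> n"
    then have "n * (\<kappa> * h)\<^sup>2 \<le> 0"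
      by (intro mult_nonpos_nonneg) auto
    with assms(4) show False
      by linarith
  qed
  have "0 \<le> \<kappa> * r" "\<kappa> * r \<le> e" "\<kappa> * (\<bar>of_int k\<bar> * h) \<le> e"
    using assms unfolding e_def by (simp_all add: mult_left_mono)
  moreover have "\<bar>of_int k * (\<kappa> * h)\<bar> = \<kappa> * (\<bar>of_int k\<bar> * h)"
    using assms(1,2) by (simp add: abs_mult)
  ultimately have e_sq: "(\<kappa> * r)\<^sup>2 \<le> e\<^sup>2" "of_int k ^ 2 * (\<kappa> * h)\<^sup>2 \<le> e\<^sup>2"
    by (simp_all add: power_mono power2_le_iff_abs_le power_mult_distrib[symmetric])
  have "\<bar>of_int k\<bar> \<le> (of_int k ^ 2 :: real)"
  proof (cases "k = 0")
    case False
    then have "1 \<le> \<bar>of_int k :: real\<bar>"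
      by linarith
    from self_le_power[OF this, of 2] show ?thesis
      by simp
  qed simp
  also have "\<dots> \<le> of_int k ^ 2 * (n * (\<kappa> * h)\<^sup>2)"
    using mult_left_mono[OF assms(4), of "of_int k ^ 2"] by simp
  also have "\<dots> = n * (of_int k ^ 2 * (\<kappa> * h)\<^sup>2)"
    by (simp add: algebra_simps)
  also have "\<dots> \<le> n * e\<^sup>2"
    using e_sq(2) \<open>0 \<le> n\<close> by (simp add: mult_left_mono)
  moreover have "n * (\<kappa> * r)\<^sup>2 \<le> n * e\<^sup>2"
    using e_sq(1) \<open>0 \<le> n\<close> by (simp add: mult_left_mono)
  ultimately show ?thesis
    unfolding e_def by linarith
qed

section \<open>Separated crossings\<close>

lemma grid_interval_cover:
  fixes h x x0 :: real
  assumes "0 < h"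
  obtains k :: int where "x0 + of_int k * h \<le> x" "x \<le> x0 + of_int (k + 1) * h"
proof -
  define k where "k = \<lfloor>(x - x0) / h\<rfloor>"
  have "of_int k \<le> (x - x0) / h" "(x - x0) / h < of_int k + 1"
    unfolding k_def by simp_all
  then show ?thesis
    using assms by (intro that[of k]) (simp_all add: pos_le_divide_eq pos_divide_less_eq algebra_simps)
qed

locale separated_crossing =
  fixes F :: "nat \<Rightarrow> real \<Rightarrow> real" and x0 a b B c :: real
  assumes crossing: "F 1 x0 = F 2 x0" and crossing_in: "x0 \<in> {a..b}"
    and lipschitz: "\<And>t. t \<in> {1, 2} \<Longrightarrow> B-lipschitz_on {a..b} (F t)"
    and separation_pos: "0 < c"
    and separation: "\<And>x. x \<in> {a..b} \<Longrightarrow> c * \<bar>x - x0\<bar> \<le> \<bar>F 2 x - F 1 x\<bar>"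
begin

text \<open>Monotonicity of the \<open>G t\<close> carries the closeness at the grid points \<open>u \<le> v\<close> over to
  all of \<open>[u, v]\<close>.\<close>

lemma gap_lower_bound:
  fixes G :: "nat \<Rightarrow> real \<Rightarrow> real"
  assumes "mono (G 1)" "mono (G 2)" "u \<le> x" "x \<le> v" "a \<le> u" "v \<le> b" "B * (v - u) \<le> \<tau>"
    and close: "\<And>t y. t \<in> {1, 2} \<Longrightarrow> y \<in> {u, v} \<Longrightarrow> \<bar>G t y - F t y\<bar> \<le> \<tau>"
  shows "c * max \<bar>u - x0\<bar> \<bar>v - x0\<bar> - 3 * \<tau> \<le> \<bar>G 2 x - G 1 x\<bar>"
proof -
  have incr: "F t v - F t u \<le> \<tau>" if "t \<in> {1, 2}" for t
  proof -
    have "F t v - F t u \<le> dist (F t v) (F t u)"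
      by (simp add: dist_real_def)
    also have "\<dots> \<le> B * dist v u"
      using assms(3-6) by (intro lipschitz_onD[OF lipschitz[OF that]]) auto
    finally show ?thesis
      using \<open>B * (v - u) \<le> \<tau>\<close> \<open>u \<le> x\<close> \<open>x \<le> v\<close> by (simp add: dist_real_def)
  qed
  define w where "w = (if \<bar>u - x0\<bar> \<le> \<bar>v - x0\<bar> then v else u)"
  have "w \<in> {u, v}" and w: "\<bar>w - x0\<bar> = max \<bar>u - x0\<bar> \<bar>v - x0\<bar>"
    unfolding w_def by auto
  then have "w \<in> {a..b}"
    using assms(3-6) by auto
  have "G 1 u \<le> G 1 x" "G 1 x \<le> G 1 v" "G 2 u \<le> G 2 x" "G 2 x \<le> G 2 v"
    using monoD[OF \<open>mono (G 1)\<close>] monoD[OF \<open>mono (G 2)\<close>] \<open>u \<le> x\<close> \<open>x \<le> v\<close> by auto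
  then have "F 2 w - F 1 w - 3 * \<tau> \<le> G 2 x - G 1 x" "G 2 x - G 1 x \<le> F 2 w - F 1 w + 3 * \<tau>"
    using incr[of 1] incr[of 2] close[of 1 u] close[of 1 v] close[of 2 u] close[of 2 v] \<open>w \<in> {u, v}\<close>
    by (auto simp: abs_le_iff)
  then show ?thesis
    using separation[OF \<open>w \<in> {a..b}\<close>] w by (auto simp: abs_le_iff abs_if split: if_splits)
qed

lemma near_crossing:
  fixes G :: "nat \<Rightarrow> real \<Rightarrow> real"
  assumes "mono (G 1)" "mono (G 2)" "0 < h" "0 < r" "B * h \<le> c / 8 * r"
    and grid_close: "\<And>t k. t \<in> {1, 2} \<Longrightarrow> x0 + of_int k * h \<in> {a..b} \<Longrightarrow>
      \<bar>G t (x0 + of_int k * h) - F t (x0 + of_int k * h)\<bar> \<le> c / 8 * max (\<bar>of_int k\<bar> * h) r"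
    and "a + h \<le> x" "x \<le> b - h"
    and minimal: "\<bar>G 2 x - G 1 x\<bar> \<le> \<bar>G 2 x0 - G 1 x0\<bar>"
  shows "\<bar>x - x0\<bar> \<le> r"
proof (rule ccontr)
  assume far: "\<not> \<bar>x - x0\<bar> \<le> r"
  obtain k where k: "x0 + of_int k * h \<le> x" "x \<le> x0 + of_int (k + 1) * h"
    using grid_interval_cover[OF \<open>0 < h\<close>] .
  define u where "u = x0 + of_int k * h"
  define v where "v = x0 + of_int (k + 1) * h"
  have "u \<le> x" "x \<le> v" "v - u = h"
    using k unfolding u_def v_def by (simp_all add: algebra_simps)
  then have "u \<in> {a..b}" "v \<in> {a..b}"
    using \<open>a + h \<le> x\<close> \<open>x \<le> b - h\<close> by auto
  define \<rho> where "\<rho> = max \<bar>u - x0\<bar> \<bar>v - x0\<bar>"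
  have "r < \<rho>"
    using far \<open>u \<le> x\<close> \<open>x \<le> v\<close> unfolding \<rho>_def by linarith
  have close: "\<bar>G t y - F t y\<bar> \<le> c / 8 * \<rho>" if "t \<in> {1, 2}" "y \<in> {u, v}" for t y
  proof -
    obtain j where "y = x0 + of_int j * h"
      using \<open>y \<in> {u, v}\<close> unfolding u_def v_def by blast
    moreover from this have "\<bar>of_int j\<bar> * h = \<bar>y - x0\<bar>"
      using \<open>0 < h\<close> by (simp add: abs_mult)
    moreover have "max \<bar>y - x0\<bar> r \<le> \<rho>"
      using \<open>y \<in> {u, v}\<close> \<open>r < \<rho>\<close> unfolding \<rho>_def by auto
    ultimately show ?thesis
      using grid_close[OF \<open>t \<in> {1, 2}\<close>, of j] \<open>y \<in> {u, v}\<close> \<open>u \<in> {a..b}\<close> \<open>v \<in> {a..b}\<close>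
        separation_pos by (auto intro: order_trans[OF _ mult_left_mono])
  qed
  have "c / 8 * r \<le> c / 8 * \<rho>"
    using \<open>r < \<rho>\<close> separation_pos by simp
  then have "c * \<rho> - 3 * (c / 8 * \<rho>) \<le> \<bar>G 2 x - G 1 x\<bar>"
    using \<open>u \<in> {a..b}\<close> \<open>v \<in> {a..b}\<close> \<open>B * h \<le> c / 8 * r\<close> \<open>v - u = h\<close> close unfolding \<rho>_def
    by (intro gap_lower_bound[OF assms(1,2) \<open>u \<le> x\<close> \<open>x \<le> v\<close>]) auto
  moreover have "\<bar>G 2 x0 - G 1 x0\<bar> \<le> c / 4 * r"
  proof -
    have "\<bar>G t x0 - F t x0\<bar> \<le> c / 8 * r" if "t \<in> {1, 2}" for t
      using grid_close[OF that, of 0] crossing_in \<open>0 < r\<close> by simp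
    from this[of 1] this[of 2] show ?thesis
      using crossing unfolding abs_le_iff by simp
  qed
  moreover have "c * r < c * \<rho>"
    using \<open>r < \<rho>\<close> separation_pos by simp
  ultimately show False
    using minimal by linarith
qed

end

lemma pop_cdf_separated_crossing:
  fixes M :: "'a measure" and X :: "nat \<Rightarrow> 'a \<Rightarrow> real" and f :: "nat \<Rightarrow> real \<Rightarrow> real"
  defines "F \<equiv> \<lambda>t. pop_cdf M (X t)"
  assumes M: "prob_space M"
    and dens: "\<And>t. t \<in> {1, 2} \<Longrightarrow> distributed M lborel (X t) (\<lambda>x. ennreal (f t x))"
    and nonneg: "\<And>t x. t \<in> {1, 2} \<Longrightarrow> 0 \<le> f t x"
    and cont: "\<And>t. t \<in> {1, 2} \<Longrightarrow> continuous_on UNIV (f t)"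
    and crossing: "F 1 x0 = F 2 x0"
    and unique: "\<And>x. F 1 x = F 2 x \<Longrightarrow> 0 < F 1 x \<Longrightarrow> F 1 x < 1 \<Longrightarrow> x = x0"
    and levels: "0 < pl" "pl < F 1 x0" "F 1 x0 < ph" "ph < 1"
    and "f 1 x0 \<noteq> f 2 x0"
  obtains a L R b B c where "separated_crossing F x0 a b B c"
    "a < L" "L < x0" "x0 < R" "R < b" "F 1 L < pl" "ph < F 1 R"
proof -
  have X: "X t \<in> borel_measurable M" if "t \<in> {1, 2}" for t
    using distributed_measurable[OF dens[OF that]] by simp
  have cont_F: "continuous_on UNIV (F t)" if "t \<in> {1, 2}" for t
    unfolding F_def using that by (intro continuous_on_pop_cdf[OF M dens nonneg cont])
  have "continuous_on UNIV (F 1)"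
    by (rule cont_F) simp
  moreover have "mono (F 1)" "(F 1 \<longlongrightarrow> 0) at_bot" "(F 1 \<longlongrightarrow> 1) at_top"
    unfolding F_def using X[of 1] M by (auto intro: mono_pop_cdf tendsto_pop_cdf_at_bot tendsto_pop_cdf_at_top)
  ultimately obtain a L R b where bracket: "a < L" "L < x0" "x0 < R" "R < b" "F 1 L < pl" "ph < F 1 R"
    and in_01: "\<And>x. x \<in> {a..b} \<Longrightarrow> 0 < F 1 x \<and> F 1 x < 1"
    using cdf_bracket[where F = "F 1", OF _ _ _ _ levels] by blast
  obtain B1 B2 where "B1-lipschitz_on {a..b} (F 1)" "B2-lipschitz_on {a..b} (F 2)"
    unfolding F_def using lipschitz_on_pop_cdf[OF M dens nonneg continuous_on_subset[OF cont]]
    by (metis insertCI subset_UNIV)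
  then have lipschitz: "(max B1 B2)-lipschitz_on {a..b} (F t)" if "t \<in> {1, 2}" for t
    using that by (auto intro: lipschitz_on_le)
  have "(F t has_real_derivative f t x0) (at x0)" if "t \<in> {1, 2}" for t
    unfolding F_def using cont[OF that] nonneg[OF that]
    by (intro pop_cdf_has_real_derivative[OF M dens[OF that]]) (auto simp: continuous_on_eq_continuous_at)
  then have deriv: "(F 1 has_real_derivative f 1 x0) (at x0)" "(F 2 has_real_derivative f 2 x0) (at x0)"
    by simp_all
  have "continuous_on {a..b} (F 1)" "continuous_on {a..b} (F 2)"
    using cont_F by (auto intro: continuous_on_subset)
  moreover have "x = x0" if "x \<in> {a..b}" "F 1 x = F 2 x" for x
    using unique in_01[OF that(1)] that(2) by auto
  moreover have "a < x0" "x0 < b"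
    using bracket by auto
  ultimately obtain c where "0 < c" "\<And>x. x \<in> {a..b} \<Longrightarrow> c * \<bar>x - x0\<bar> \<le> \<bar>F 2 x - F 1 x\<bar>"
    using transversal_crossing_linear_separation[OF _ _ _ _ deriv \<open>f 1 x0 \<noteq> f 2 x0\<close> crossing] by blast
  then have "separated_crossing F x0 a b (max B1 B2) c"
    using crossing bracket lipschitz by unfold_locales auto
  then show ?thesis
    using that bracket by blast
qed

section \<open>The root-n rate\<close>

locale crossing_estimation = prob_space M + separated_crossing F x0 a b B c
  for M :: "'a measure" and F x0 a b B c +
  fixes Z :: "nat \<Rightarrow> nat \<Rightarrow> 'a \<Rightarrow> real" and pl ph L R :: real
  assumes sample_measurable: "\<And>t i. t \<in> {1, 2} \<Longrightarrow> random_variable borel (Z t i)"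
    and concentration: "\<And>t n y e. t \<in> {1, 2} \<Longrightarrow> 0 < n \<Longrightarrow> 0 \<le> e \<Longrightarrow>
      prob {\<omega> \<in> space M. e \<le> \<bar>emp_cdf (Z t) n \<omega> y - F t y\<bar>} \<le> 2 * exp (- 2 * real n * e\<^sup>2)"
    and pl_pos: "0 < pl"
    and bracket: "a < L" "L < x0" "x0 < R" "R < b"
    and levels: "F 1 L < pl" "pl < F 1 x0" "F 1 x0 < ph" "ph < F 1 R"
begin

definition deviation :: "nat \<Rightarrow> nat \<Rightarrow> real \<Rightarrow> real \<Rightarrow> 'a set" where
  "deviation t n y e = {\<omega> \<in> space M. e \<le> \<bar>emp_cdf (Z t) n \<omega> y - F t y\<bar>}"

lemma deviation_in_events:
  assumes "t \<in> {1, 2}"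
  shows "deviation t n y e \<in> events"
proof -
  have [measurable]: "(\<lambda>\<omega>. emp_cdf (Z t) n \<omega> y) \<in> borel_measurable M"
    using sample_measurable[OF assms] by (rule borel_measurable_emp_cdf)
  show ?thesis
    unfolding deviation_def by measurable
qed

definition margin :: real where
  "margin = Min {pl - F 1 L, F 1 x0 - pl, ph - F 1 x0, F 1 R - ph}"

lemma margin_pos: "0 < margin"
  using levels unfolding margin_def by simp

definition level_deviation :: "nat \<Rightarrow> 'a set" where
  "level_deviation n = (\<Union>y\<in>{L, x0, R}. deviation 1 n y margin)"

lemma level_deviation_in_events: "level_deviation n \<in> events"
  unfolding level_deviation_def by (intro sets.finite_UN deviation_in_events) auto

lemma prob_level_deviation:
  assumes "0 < n"
  shows "prob (level_deviation n) \<le> 6 * exp (- 2 * real n * margin\<^sup>2)"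
proof -
  have "prob (level_deviation n) \<le> (\<Sum>y\<in>{L, x0, R}. prob (deviation 1 n y margin))"
    unfolding level_deviation_def by (intro finite_measure_subadditive_finite) (auto intro: deviation_in_events)
  also have "\<dots> \<le> (\<Sum>y\<in>{L, x0, R}. 2 * exp (- 2 * real n * margin\<^sup>2))"
    using concentration[of 1 n margin] margin_pos assms unfolding deviation_def by (intro sum_mono) auto
  also have "\<dots> = 6 * exp (- 2 * real n * margin\<^sup>2)"
    using bracket by simp
  finally show ?thesis .
qed

lemma xhat_star_bracketed:
  assumes "\<omega> \<in> space M" "\<omega> \<notin> level_deviation n"
  defines "G \<equiv> \<lambda>t. emp_cdf (Z t) n \<omega>" and "x \<equiv> xhat_star (Z 1) (Z 2) pl ph n \<omega>"
  shows "x \<in> {L..R}" and "\<bar>G 2 x - G 1 x\<bar> \<le> \<bar>G 2 x0 - G 1 x0\<bar>"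
proof -
  have "\<bar>G 1 y - F 1 y\<bar> < margin" if "y \<in> {L, x0, R}" for y
    using assms(1,2) that unfolding level_deviation_def deviation_def G_def by auto
  then have "\<bar>G 1 L - F 1 L\<bar> < margin" "\<bar>G 1 x0 - F 1 x0\<bar> < margin" "\<bar>G 1 R - F 1 R\<bar> < margin"
    by auto
  moreover have "margin \<le> pl - F 1 L" "margin \<le> F 1 x0 - pl" "margin \<le> ph - F 1 x0" "margin \<le> F 1 R - ph"
    unfolding margin_def by simp_all
  ultimately have "G 1 L < pl" "pl \<le> G 1 x0" "G 1 x0 < ph" "ph \<le> G 1 R"
    unfolding abs_less_iff by linarith+
  then have "L \<le> emp_quantile (Z 1) n \<omega> pl" "emp_quantile (Z 1) n \<omega> pl \<le> x0"
      "x0 \<le> emp_quantile (Z 1) n \<omega> ph" "emp_quantile (Z 1) n \<omega> ph \<le> R"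
    using pl_pos levels unfolding G_def by (auto intro: le_emp_quantile emp_quantile_le)
  moreover note xhat_star_minimises[where S="Z 1" and T="Z 2" and n=n and \<omega>=\<omega> and pl=pl and ph=ph]
  ultimately show "x \<in> {L..R}" "\<bar>G 2 x - G 1 x\<bar> \<le> \<bar>G 2 x0 - G 1 x0\<bar>"
    unfolding G_def x_def by (meson atLeastAtMost_iff order_trans)+
qed

definition grid :: "real \<Rightarrow> int set" where
  "grid h = {k. x0 + of_int k * h \<in> {a..b}}"

lemma finite_grid:
  assumes "0 < h"
  shows "finite (grid h)"
proof (rule finite_subset)
  show "grid h \<subseteq> {\<lfloor>(a - x0) / h\<rfloor>..\<lceil>(b - x0) / h\<rceil>}"
  proof
    fix k assume "k \<in> grid h"
    then have "(a - x0) / h \<le> of_int k" "of_int k \<le> (b - x0) / h"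
      using assms unfolding grid_def by (auto simp: pos_divide_le_eq pos_le_divide_eq algebra_simps)
    then show "k \<in> {\<lfloor>(a - x0) / h\<rfloor>..\<lceil>(b - x0) / h\<rceil>}"
      by (auto simp: floor_le_iff le_ceiling_iff)
  qed
qed simp

definition grid_deviation :: "nat \<Rightarrow> real \<Rightarrow> real \<Rightarrow> 'a set" where
  "grid_deviation n h r =
    (\<Union>t\<in>{1, 2}. \<Union>k\<in>grid h. deviation t n (x0 + of_int k * h) (c / 8 * max (\<bar>of_int k\<bar> * h) r))"

lemma grid_deviation_in_events: "0 < h \<Longrightarrow> grid_deviation n h r \<in> events"
  unfolding grid_deviation_def using finite_grid by (intro sets.finite_UN deviation_in_events) auto

lemma prob_deviation_at_grid_point:
  assumes "t \<in> {1, 2}" "0 < n" "0 < h" "0 \<le> r" "1 \<le> real n * (c / 8 * h)\<^sup>2"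
  shows "prob (deviation t n (x0 + of_int k * h) (c / 8 * max (\<bar>of_int k\<bar> * h) r))
    \<le> 2 * exp (- real n * (c / 8 * r)\<^sup>2) * exp (- 1) ^ nat \<bar>k\<bar>"
proof -
  define e where "e = c / 8 * max (\<bar>of_int k\<bar> * h) r"
  have "0 \<le> e"
    using separation_pos \<open>0 \<le> r\<close> unfolding e_def by (simp add: le_max_iff_disj)
  have "prob (deviation t n (x0 + of_int k * h) e) \<le> 2 * exp (- 2 * real n * e\<^sup>2)"
    using concentration[OF \<open>t \<in> {1, 2}\<close> \<open>0 < n\<close> \<open>0 \<le> e\<close>] unfolding deviation_def .
  also have "\<dots> \<le> 2 * exp (- real n * (c / 8 * r)\<^sup>2 - \<bar>of_int k\<bar>)"
    using grid_tolerance_exponent[of "c / 8" h r "real n" k] separation_pos assms(3-5)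
    unfolding e_def by simp
  also have "\<dots> = 2 * exp (- real n * (c / 8 * r)\<^sup>2) * exp (- \<bar>of_int k\<bar>)"
    by (simp add: mult.assoc exp_add[symmetric])
  also have "exp (- \<bar>of_int k\<bar>) = exp (real (nat \<bar>k\<bar>) * (- 1))"
    by simp
  also have "\<dots> = exp (- 1) ^ nat \<bar>k\<bar>"
    by (rule exp_of_nat_mult)
  finally show ?thesis
    unfolding e_def .
qed

lemma prob_grid_deviation:
  assumes "0 < n" "0 < h" "0 \<le> r" "1 \<le> real n * (c / 8 * h)\<^sup>2"
  shows "prob (grid_deviation n h r) \<le> 16 * exp (- real n * (c / 8 * r)\<^sup>2)"
proof -
  let ?D = "\<lambda>t k. deviation t n (x0 + of_int k * h) (c / 8 * max (\<bar>of_int k\<bar> * h) r)"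
  let ?q = "exp (- 1) :: real"
  have events: "?D t k \<in> events" if "t \<in> {1, 2}" for t k
    using that by (rule deviation_in_events)
  have "?q \<le> 1 / 2"
    using exp_ge_add_one_self[of 1] by (simp add: exp_minus field_simps)
  then have "2 / (1 - ?q) \<le> 4"
    by (simp add: pos_divide_le_eq)
  then have geometric: "(\<Sum>k\<in>grid h. ?q ^ nat \<bar>k\<bar>) \<le> 4"
    using sum_power_abs_int_le[OF finite_grid[OF \<open>0 < h\<close>], of ?q] \<open>?q \<le> 1 / 2\<close> by simp
  have "prob (grid_deviation n h r) \<le> (\<Sum>t\<in>{1, 2}. prob (\<Union>k\<in>grid h. ?D t k))"
    unfolding grid_deviation_def using events finite_grid[OF \<open>0 < h\<close>]
    by (intro finite_measure_subadditive_finite) auto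
  also have "\<dots> \<le> (\<Sum>t\<in>{1::nat, 2}. \<Sum>k\<in>grid h. prob (?D t k))"
    using events finite_grid[OF \<open>0 < h\<close>] by (intro sum_mono finite_measure_subadditive_finite) auto
  also have "\<dots> \<le> (\<Sum>t\<in>{1::nat, 2}. \<Sum>k\<in>grid h. 2 * exp (- real n * (c / 8 * r)\<^sup>2) * ?q ^ nat \<bar>k\<bar>)"
    using assms by (intro sum_mono prob_deviation_at_grid_point) auto
  also have "\<dots> = 4 * exp (- real n * (c / 8 * r)\<^sup>2) * (\<Sum>k\<in>grid h. ?q ^ nat \<bar>k\<bar>)"
    by (simp add: sum_distrib_left mult.assoc)
  also have "\<dots> \<le> 16 * exp (- real n * (c / 8 * r)\<^sup>2)"
    using mult_left_mono[OF geometric, of "4 * exp (- real n * (c / 8 * r)\<^sup>2)"] by simp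
  finally show ?thesis .
qed

lemma xhat_star_near_crossing:
  assumes "0 < h" "0 < r" "B * h \<le> c / 8 * r" "h \<le> L - a" "h \<le> b - R"
    and "\<omega> \<in> space M" "\<omega> \<notin> grid_deviation n h r" "\<omega> \<notin> level_deviation n"
  shows "\<bar>xhat_star (Z 1) (Z 2) pl ph n \<omega> - x0\<bar> \<le> r"
proof -
  let ?G = "\<lambda>t. emp_cdf (Z t) n \<omega>"
  let ?x = "xhat_star (Z 1) (Z 2) pl ph n \<omega>"
  have "?x \<in> {L..R}" "\<bar>?G 2 ?x - ?G 1 ?x\<bar> \<le> \<bar>?G 2 x0 - ?G 1 x0\<bar>"
    using xhat_star_bracketed[OF assms(6,8)] by auto
  moreover have "\<bar>?G t (x0 + of_int k * h) - F t (x0 + of_int k * h)\<bar> \<le> c / 8 * max (\<bar>of_int k\<bar> * h) r"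
    if "t \<in> {1, 2}" "x0 + of_int k * h \<in> {a..b}" for t k
    using assms(6,7) that unfolding grid_deviation_def deviation_def grid_def by force
  ultimately show ?thesis
    using assms(1-5) by (intro near_crossing[where G = ?G] mono_emp_cdf) auto
qed

lemma xhat_star_tail_bound:
  assumes "0 < n" "0 < h" "0 < r" "B * h \<le> c / 8 * r" "h \<le> L - a" "h \<le> b - R"
    and "1 \<le> real n * (c / 8 * h)\<^sup>2"
  shows "\<exists>A\<in>events. {\<omega> \<in> space M. r < \<bar>xhat_star (Z 1) (Z 2) pl ph n \<omega> - x0\<bar>} \<subseteq> A \<and>
    prob A \<le> 16 * exp (- real n * (c / 8 * r)\<^sup>2) + 6 * exp (- 2 * real n * margin\<^sup>2)"
proof (intro bexI conjI)
  let ?A = "grid_deviation n h r \<union> level_deviation n"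
  show "?A \<in> events"
    using grid_deviation_in_events[OF \<open>0 < h\<close>] level_deviation_in_events by blast
  show "{\<omega> \<in> space M. r < \<bar>xhat_star (Z 1) (Z 2) pl ph n \<omega> - x0\<bar>} \<subseteq> ?A"
    using xhat_star_near_crossing[OF assms(2-6)] by fastforce
  have "prob ?A \<le> prob (grid_deviation n h r) + prob (level_deviation n)"
    using grid_deviation_in_events[OF \<open>0 < h\<close>] level_deviation_in_events by (rule measure_Un_le)
  then show "prob ?A \<le> 16 * exp (- real n * (c / 8 * r)\<^sup>2) + 6 * exp (- 2 * real n * margin\<^sup>2)"
    using prob_grid_deviation[of n h r] prob_level_deviation[of n] assms by linarith
qed

lemma sqrt_n_xhat_star_tail_bound:
  assumes "max 1 (8 * B / c) \<le> c / 8 * K"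
  shows "\<forall>\<^sub>F n in sequentially. \<exists>A\<in>events.
    {\<omega> \<in> space M. K < \<bar>sqrt (real n) * (xhat_star (Z 1) (Z 2) pl ph n \<omega> - x0)\<bar>} \<subseteq> A \<and>
    prob A \<le> 16 * exp (- (c / 8 * K)\<^sup>2) + 6 * exp (- 2 * real n * margin\<^sup>2)"
proof -
  define m where "m = max 1 (8 * B / c)"
  have "1 \<le> m" "8 * B / c \<le> m"
    unfolding m_def by auto
  then have "B \<le> m * (c / 8)"
    using separation_pos by (simp add: pos_divide_le_eq)
  have "0 < c / 8 * K"
    using assms by linarith
  then have "0 < K"
    using separation_pos by (simp add: zero_less_mult_iff)
  have "((\<lambda>n. K / m / sqrt (real n)) \<longlongrightarrow> 0) sequentially"
    by real_asymp
  then have "\<forall>\<^sub>F n in sequentially. K / m / sqrt (real n) < min (L - a) (b - R)"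
    using bracket by (intro order_tendstoD(2)) auto
  with eventually_gt_at_top[of 0] show ?thesis
  proof eventually_elim
    case (elim n)
    define r where "r = K / sqrt (real n)"
    have "0 < sqrt (real n)" "0 < r"
      using elim \<open>0 < K\<close> unfolding r_def by auto
    have "K < \<bar>sqrt (real n) * (xhat_star (Z 1) (Z 2) pl ph n \<omega> - x0)\<bar> \<longleftrightarrow>
        r < \<bar>xhat_star (Z 1) (Z 2) pl ph n \<omega> - x0\<bar>" for \<omega>
      using \<open>0 < sqrt (real n)\<close> unfolding r_def by (simp add: abs_mult divide_less_eq mult.commute)
    moreover have "real n * (c / 8 * r)\<^sup>2 = (c / 8 * K)\<^sup>2" "real n * (c / 8 * (r / m))\<^sup>2 = (c / 8 * K / m)\<^sup>2"
      using \<open>0 < sqrt (real n)\<close> unfolding r_def by (simp_all add: power_mult_distrib power_divide)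
    moreover have "1 \<le> (c / 8 * K / m)\<^sup>2"
      using assms \<open>1 \<le> m\<close> unfolding m_def by (simp add: le_divide_eq)
    moreover have "B * (r / m) \<le> c / 8 * r"
      using \<open>B \<le> m * (c / 8)\<close> \<open>0 < r\<close> \<open>1 \<le> m\<close> by (simp add: field_simps mult_right_mono)
    moreover have "r / m \<le> L - a" "r / m \<le> b - R"
      using elim unfolding r_def by (auto simp: mult.commute)
    ultimately show ?case
      using xhat_star_tail_bound[of n "r / m" r] elim \<open>0 < r\<close> \<open>1 \<le> m\<close> by auto
  qed
qed

theorem bounded_in_prob_xhat_star:
  "bounded_in_prob M (\<lambda>n \<omega>. sqrt (real n) * (xhat_star (Z 1) (Z 2) pl ph n \<omega> - x0))"
  unfolding bounded_in_prob_def
proof (intro allI impI)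
  fix \<epsilon> :: real assume "0 < \<epsilon>"
  have "0 < c / 8"
    using separation_pos by simp
  then have "filterlim (\<lambda>K. c / 8 * K) at_top at_top" "((\<lambda>K. 16 * exp (- (c / 8 * K)\<^sup>2)) \<longlongrightarrow> 0) at_top"
    by real_asymp+
  then have "\<forall>\<^sub>F K in at_top. max 1 (8 * B / c) \<le> c / 8 * K \<and> 16 * exp (- (c / 8 * K)\<^sup>2) < \<epsilon> / 2"
    using \<open>0 < \<epsilon>\<close> by (intro eventually_conj order_tendstoD(2)) (auto simp: filterlim_at_top)
  then obtain K where K: "max 1 (8 * B / c) \<le> c / 8 * K" "16 * exp (- (c / 8 * K)\<^sup>2) < \<epsilon> / 2"
    unfolding eventually_at_top_linorder by blast
  have "((\<lambda>n. 6 * exp (- 2 * real n * \<gamma>\<^sup>2)) \<longlongrightarrow> 0) sequentially" if "0 < \<gamma>" for \<gamma> :: real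
    using that by real_asymp
  from order_tendstoD(2)[OF this[OF margin_pos], of "\<epsilon> / 2"]
  have "\<forall>\<^sub>F n in sequentially. 6 * exp (- 2 * real n * margin\<^sup>2) < \<epsilon> / 2"
    using \<open>0 < \<epsilon>\<close> by simp
  with sqrt_n_xhat_star_tail_bound[OF K(1)]
  have "\<forall>\<^sub>F n in sequentially. \<exists>A\<in>events.
      {\<omega> \<in> space M. K < \<bar>sqrt (real n) * (xhat_star (Z 1) (Z 2) pl ph n \<omega> - x0)\<bar>} \<subseteq> A \<and> prob A < \<epsilon>"
  proof eventually_elim
    case (elim n)
    then obtain A where "A \<in> events"
      and "{\<omega> \<in> space M. K < \<bar>sqrt (real n) * (xhat_star (Z 1) (Z 2) pl ph n \<omega> - x0)\<bar>} \<subseteq> A"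
      and "prob A \<le> 16 * exp (- (c / 8 * K)\<^sup>2) + 6 * exp (- 2 * real n * margin\<^sup>2)"
      by blast
    with K(2) elim(2) show ?case
      by (intro bexI[of _ A] conjI) auto
  qed
  then show "\<exists>K N. \<forall>n\<ge>N. \<exists>A\<in>events.
      {\<omega> \<in> space M. K < \<bar>sqrt (real n) * (xhat_star (Z 1) (Z 2) pl ph n \<omega> - x0)\<bar>} \<subseteq> A \<and> prob A < \<epsilon>"
    unfolding eventually_sequentially by blast
qed

end

theorem lemma2:
  fixes M :: "'a measure"
    and \<X> :: "real set"
    and X :: "nat \<Rightarrow> 'a \<Rightarrow> real"           \<comment> \<open>population treatment X_t\<close>
    and U :: "nat \<Rightarrow> real \<Rightarrow> 'a \<Rightarrow> real"   \<comment> \<open>U_t(x)\<close>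
    and g :: "nat \<Rightarrow> real \<Rightarrow> real"         \<comment> \<open>g_t\<close>
    and Y :: "nat \<Rightarrow> 'a \<Rightarrow> real"           \<comment> \<open>observed outcome Y_t = Y_t(X_t)\<close>
    and Xs Ys :: "nat \<Rightarrow> nat \<Rightarrow> 'a \<Rightarrow> real"  \<comment> \<open>samples X_{it} = Xs t i, Y_{it} = Ys t i\<close>
    and f :: "nat \<Rightarrow> real \<Rightarrow> real"         \<comment> \<open>densities f_{X_t}\<close>
    and pl ph xs :: real
  assumes M: "prob_space M"
    and p: "0 < pl" "pl < ph" "ph < 1"
    and X_range: "\<And>t \<omega>. t \<in> {1,2} \<Longrightarrow> \<omega> \<in> space M \<Longrightarrow> X t \<omega> \<in> \<X>"
    \<comment> \<open>Assumption 1\<close>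
    and U_meas: "\<And>t x. t \<in> {1,2} \<Longrightarrow> U t x \<in> borel_measurable M"
    and Y_def: "\<And>t \<omega>. t \<in> {1,2} \<Longrightarrow> \<omega> \<in> space M \<Longrightarrow> Y t \<omega> = g t (U t (X t \<omega>) \<omega>)"
    and Y_meas: "\<And>t. t \<in> {1,2} \<Longrightarrow> Y t \<in> borel_measurable M"
    and A1: "\<And>x. x \<in> \<X> \<Longrightarrow>
        distr M borel (\<lambda>\<omega>. (U 1 x \<omega>, pop_cdf M (X 1) (X 1 \<omega>)))
      = distr M borel (\<lambda>\<omega>. (U 2 x \<omega>, pop_cdf M (X 2) (X 2 \<omega>)))"
    \<comment> \<open>Assumption 5\<close>
    and A5_meas: "\<And>t i. t \<in> {1,2} \<Longrightarrow> Xs t i \<in> borel_measurable M \<and> Ys t i \<in> borel_measurable M"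
    and A5_indep: "prob_space.indep_vars M (\<lambda>_. borel)
        (\<lambda>(t,i) \<omega>. (Ys t i \<omega>, Xs t i \<omega>)) ({1,2} \<times> UNIV)"
    and A5_ident: "\<And>t i. t \<in> {1,2} \<Longrightarrow>
        distr M borel (\<lambda>\<omega>. (Ys t i \<omega>, Xs t i \<omega>)) = distr M borel (\<lambda>\<omega>. (Y t \<omega>, X t \<omega>))"
    \<comment> \<open>Assumption 6 (i)\<close>
    and A6_cross: "pop_cdf M (X 1) xs = pop_cdf M (X 2) xs"
      "0 < pop_cdf M (X 1) xs" "pop_cdf M (X 1) xs < 1"
    and A6_unique: "\<And>x. pop_cdf M (X 1) x = pop_cdf M (X 2) x \<Longrightarrow>
        0 < pop_cdf M (X 1) x \<Longrightarrow> pop_cdf M (X 1) x < 1 \<Longrightarrow> x = xs"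
    and A6_p: "pl < pop_cdf M (X 1) xs" "pop_cdf M (X 1) xs < ph"
    \<comment> \<open>Assumption 6 (ii)\<close>
    and A6_dens: "\<And>t. t \<in> {1,2} \<Longrightarrow> distributed M lborel (X t) (\<lambda>x. ennreal (f t x))"
    and A6_cont: "\<And>t. t \<in> {1,2} \<Longrightarrow> continuous_on UNIV (f t)"
    and A6_nonneg: "\<And>t x. t \<in> {1,2} \<Longrightarrow> 0 \<le> f t x"
    and A6_pos: "\<And>t x. t \<in> {1,2} \<Longrightarrow> x \<in> interior \<X> \<Longrightarrow> f t x > 0"
    and A6_neq: "f 1 xs \<noteq> f 2 xs"
  shows "bounded_in_prob M
           (\<lambda>n \<omega>. sqrt (real n) * (xhat_star (Xs 1) (Xs 2) pl ph n \<omega> - xs))"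
proof -
  interpret prob_space M
    by (rule M)
  let ?F = "\<lambda>t. pop_cdf M (X t)"
  obtain a L R b B c where "separated_crossing ?F xs a b B c"
    and "a < L" "L < xs" "xs < R" "R < b" "?F 1 L < pl" "ph < ?F 1 R"
    using pop_cdf_separated_crossing[OF M A6_dens A6_nonneg A6_cont A6_cross(1) A6_unique
        p(1) A6_p p(3) A6_neq] .
  moreover have "prob {\<omega> \<in> space M. e \<le> \<bar>emp_cdf (Xs t) n \<omega> y - ?F t y\<bar>} \<le> 2 * exp (- 2 * real n * e\<^sup>2)"
    if "t \<in> {1, 2}" "0 < n" "0 \<le> e" for t n y e
    using that distributed_measurable[OF A6_dens[OF that(1)]] Y_meas[OF that(1)]
    by (intro sample_emp_cdf_concentration[OF A5_indep A5_ident]) auto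
  ultimately have "crossing_estimation M ?F xs a b B c Xs pl ph L R"
    unfolding crossing_estimation_def crossing_estimation_axioms_def
    using M A5_meas p(1) A6_p by auto
  then show ?thesis
    by (rule crossing_estimation.bounded_in_prob_xhat_star)
qed

end
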